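(* Let $A\in\mathbb{R}^{n\times n}$ be asymptotically stable and $B\in\mathbb{R}^{n\times q}$. For $m\ge1$ let $V_m=[\mathcal V_1,\ldots,\mathcal V_m]\in\mathbb{R}^{n\times 2mq}$, $\mathcal V_i\in\mathbb{R}^{n\times 2q}$, have orthonormal columns spanning the block extended Krylov subspace $\mathbf{EK}_m^\square(A,B)=\operatorname{range}([B,A^{-1}B,AB,A^{-2}B,\ldots,A^{m-1}B,A^{-m}B])$ (nested in $m$), satisfying the Arnoldi relation $$AV_m=V_mT_m+\mathcal V_{m+1}E_{m+1}^{\mathsf T}\underline{T}_m,$$ where $\underline{T}_m=V_{m+1}^{\mathsf T}AV_m\in\mathbb{R}^{2(m+1)q\times 2mq}$, $T_m=V_m^{\mathsf T}AV_m$ is its leading $2mq\times2mq$ block, and $E_{m+1}=e_{m+1}\otimes I_{2q}$. Let $p_j\in\mathbb{C}$ with $\operatorname{Re}(p_j)<0$, let $m_{j-1}\le m_j$ be integers, and let $W_{j-1}=V_{m_{j-1}}\Upsilon_{j-1}$ for some $\Upsilon_{j-1}\in\mathbb{C}^{2m_{j-1}q\times q}$. Seek $S_j=V_{m_j}Y_{m_j}$, $Y_{m_j}\in\mathbb{C}^{2m_jq\times q}$, approximating the solution of $(A+p_jI)S_j=W_{j-1}$, with residual $R_{m_j}=(A+p_jI)S_j-W_{j-1}$. Then: (i) If the Galerkin condition $V_{m_j}^{\mathsf T}R_{m_j}=0$ is imposed, $Y_{m_j}$ is the solution of $$(T_{m_j}+p_jI_{2m_jq})Y_{m_j}=[\Upsilon_{j-1};O_{2(m_j-m_{j-1})q\times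 q}],$$ and $\|R_{m_j}\|_F=\|E_{m_j+1}^{\mathsf T}\underline{T}_{m_j}Y_{m_j}\|_F$. (ii) If a minimal residual condition is imposed, i.e. $Y_{m_j}$ minimizes $\|R_{m_j}\|_F$ over $Y\in\mathbb{C}^{2m_jq\times q}$, then $$Y_{m_j}=\arg\min_{Y\in\mathbb{C}^{2m_jq\times q}}\big\|(\underline{T}_{m_j}+p_j[I_{2m_jq};O_{2q\times2m_jq}])Y-[\Upsilon_{j-1};O_{2(m_j-m_{j-1}+1)q\times q}]\big\|_F,$$ and $\|R_{m_j}\|_F=\|Q_2^{*}[\Upsilon_{j-1};O_{2(m_j-m_{j-1}+1)q\times q}]\|_F$, where the columns of $Q_2$ form an orthonormal basis of the orthogonal complement (in $\mathbb{C}^{2(m_j+1)q}$) of the range of $\underline{T}_{m_j}+p_j[I_{2m_jq};O_{2q\times2m_jq}]$.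
   Context: $[M;N]$ denotes vertical concatenation of $M$ on top of $N$; $O_{a\times b}$ is the $a\times b$ zero matrix; $e_i$ is the $i$-th canonical basis vector; $\otimes$ is the Kronecker product; $\|\cdot\|_F$ is the Frobenius norm; $Q_2^*$ is the conjugate transpose. The matrix $V_{m_{j-1}}$ consists of the first $2m_{j-1}q$ columns of $V_{m_j}$. *)

theory Defs
  imports "Jordan_Normal_Form.Char_Poly"
begin

definition range_mat :: "'a::comm_semiring_1 mat \<Rightarrow> 'a vec set" where
  "range_mat M = {M *\<^sub>v x | x. x \<in> carrier_vec (dim_col M)}"

definition span_vecs :: "nat \<Rightarrow> real vec set \<Rightarrow> real vec set" where
  "span_vecs n G = {vec n (\<lambda>r. \<Sum>i<N. c i * (g i $ r)) | (N::nat) (c::nat \<Rightarrow> real) (g::nat \<Rightarrow> real vec). \<forall>i<N. g i \<in> G}"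

(* Columns of B, A^k B (0 \<le> k < m) and A^{-k} B (1 \<le> k \<le> m); the vector A^{-k} b is
   the (unique, A being invertible) x with A^k x = b. *)
definition ext_krylov_gens :: "real mat \<Rightarrow> real mat \<Rightarrow> nat \<Rightarrow> real vec set" where
  "ext_krylov_gens A B m =
     {(A ^\<^sub>m k) *\<^sub>v col B j | k j. k < m \<and> j < dim_col B} \<union>
     {x. x \<in> carrier_vec (dim_row A) \<and>
         (\<exists>k j. 1 \<le> k \<and> k \<le> m \<and> j < dim_col B \<and> (A ^\<^sub>m k) *\<^sub>v x = col B j)}"

definition ext_krylov :: "real mat \<Rightarrow> real mat \<Rightarrow> nat \<Rightarrow> real vec set" where
  "ext_krylov A B m = span_vecs (dim_row A) (ext_krylov_gens A B m)"

definition asympt_stable :: "real mat \<Rightarrow> bool" where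
  "asympt_stable A \<longleftrightarrow> A \<in> carrier_mat (dim_row A) (dim_row A) \<and>
     (\<forall>ev. eigenvalue (map_mat complex_of_real A) ev \<longrightarrow> Re ev < 0)"

definition col_block :: "'a mat \<Rightarrow> nat \<Rightarrow> nat \<Rightarrow> 'a mat" where
  "col_block M a b = mat (dim_row M) (b - a) (\<lambda>(i,j). M $$ (i, a + j))"

definition row_block :: "'a mat \<Rightarrow> nat \<Rightarrow> nat \<Rightarrow> 'a mat" where
  "row_block M a b = mat (b - a) (dim_col M) (\<lambda>(i,j). M $$ (a + i, j))"

(* [U; O] with total number of rows r *)
definition pad_rows :: "'a::zero mat \<Rightarrow> nat \<Rightarrow> 'a mat" where
  "pad_rows U r = mat r (dim_col U) (\<lambda>(i,j). if i < dim_row U then U $$ (i,j) else 0)"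

definition ctrans :: "complex mat \<Rightarrow> complex mat" where
  "ctrans M = transpose_mat (map_mat cnj M)"

definition cmat :: "real mat \<Rightarrow> complex mat" where
  "cmat M = map_mat complex_of_real M"

definition frob_norm :: "complex mat \<Rightarrow> real" where
  "frob_norm M = sqrt (\<Sum>i<dim_row M. \<Sum>j<dim_col M. (cmod (M $$ (i,j)))\<^sup>2)"

definition orth_compl :: "nat \<Rightarrow> complex vec set \<Rightarrow> complex vec set" where
  "orth_compl N S = {x \<in> carrier_vec N. \<forall>y\<in>S. (\<Sum>i<N. cnj (y $ i) * x $ i) = 0}"

end

theory Submission
  imports Defs
begin

(* Everything is pulled back through the orthonormal basis V_(mj+1). Nestedness of the bases
   gives V_mj = V_(mj+1) [I; 0] and V_mjm1 Ups = V_(mj+1) [Ups; 0], and together with the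
   Arnoldi relation A V_mj = V_(mj+1) Tu_mj this factors the residual as
   R(Y) = V_(mj+1) (M Y - G), where M = Tu_mj + p [I; 0] and G = [Ups; 0]. Since V_(mj+1) is an
   isometry, the residual norm is the Frobenius norm of M Y - G.
   (i) Projecting onto V_mj keeps the first 2 mj q rows of M Y - G; the Galerkin condition makes
   them vanish, which is the projected shifted system, and leaves only the last block row,
   i.e. (Tu_mj restricted to its last 2q rows) Y.
   (ii) A minimiser of the Frobenius norm of M Y - G satisfies the normal equations
   M^* (M Y - G) = 0, so the columns of M Y - G lie in the orthogonal complement of range M.
   Writing M Y - G = Q2 X, we get X = Q2^* (M Y - G) = - Q2^* G because Q2^* M = 0. *)

(* Entries of products are expanded by index_mult_mat_sum instead. *)
declare index_mult_mat(1)[simp del]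

lemma index_mult_mat_sum:
  assumes "A \<in> carrier_mat a b" "B \<in> carrier_mat b c" "i < a" "j < c"
  shows "(A * B) $$ (i,j) = (\<Sum>l<b. A $$ (i,l) * B $$ (l,j))"
  using assms by (auto simp: index_mult_mat(1) scalar_prod_def lessThan_atLeast0 intro!: sum.cong)

lemma col_block_dims[simp]:
  "dim_row (col_block M a b) = dim_row M" "dim_col (col_block M a b) = b - a"
  by (auto simp: col_block_def)

lemma row_block_dims[simp]:
  "dim_row (row_block M a b) = b - a" "dim_col (row_block M a b) = dim_col M"
  by (auto simp: row_block_def)

lemma pad_rows_dims[simp]: "dim_row (pad_rows U r) = r" "dim_col (pad_rows U r) = dim_col U"
  by (auto simp: pad_rows_def)

lemma cmat_dims[simp]: "dim_row (cmat M) = dim_row M" "dim_col (cmat M) = dim_col M"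
  by (auto simp: cmat_def)

lemma ctrans_dims[simp]: "dim_row (ctrans M) = dim_col M" "dim_col (ctrans M) = dim_row M"
  by (auto simp: ctrans_def)

lemma index_col_block[simp]:
  "i < dim_row M \<Longrightarrow> j < b - a \<Longrightarrow> col_block M a b $$ (i,j) = M $$ (i, a+j)"
  by (auto simp: col_block_def)

lemma index_row_block[simp]:
  "i < b - a \<Longrightarrow> j < dim_col M \<Longrightarrow> row_block M a b $$ (i,j) = M $$ (a+i, j)"
  by (auto simp: row_block_def)

lemma index_pad_rows[simp]:
  "i < r \<Longrightarrow> j < dim_col U \<Longrightarrow> pad_rows U r $$ (i,j) = (if i < dim_row U then U $$ (i,j) else 0)"
  by (auto simp: pad_rows_def)

lemma index_cmat[simp]:
  "i < dim_row M \<Longrightarrow> j < dim_col M \<Longrightarrow> cmat M $$ (i,j) = complex_of_real (M $$ (i,j))"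
  by (auto simp: cmat_def)

lemma index_ctrans[simp]:
  "i < dim_col M \<Longrightarrow> j < dim_row M \<Longrightarrow> ctrans M $$ (i,j) = cnj (M $$ (j,i))"
  by (auto simp: ctrans_def)

lemma col_block_carrier_mat[simp]: "M \<in> carrier_mat r k \<Longrightarrow> col_block M a b \<in> carrier_mat r (b - a)"
  by (intro carrier_matI) auto

lemma col_block_0_carrier_mat[simp]: "M \<in> carrier_mat r k \<Longrightarrow> col_block M 0 c \<in> carrier_mat r c"
  by (intro carrier_matI) auto

lemma row_block_carrier_mat[simp]: "M \<in> carrier_mat r k \<Longrightarrow> row_block M a b \<in> carrier_mat (b - a) k"
  by (intro carrier_matI) auto

lemma pad_rows_carrier_mat[simp]: "U \<in> carrier_mat c s \<Longrightarrow> pad_rows U r \<in> carrier_mat r s"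
  by (intro carrier_matI) auto

lemma cmat_carrier_mat[simp]: "M \<in> carrier_mat r k \<Longrightarrow> cmat M \<in> carrier_mat r k"
  by (intro carrier_matI) auto

lemma ctrans_carrier_mat[simp]: "M \<in> carrier_mat r k \<Longrightarrow> ctrans M \<in> carrier_mat k r"
  by (intro carrier_matI) auto

lemma col_block_col_block: "c \<le> b \<Longrightarrow> col_block (col_block M 0 b) 0 c = col_block M 0 c"
  by (auto intro!: eq_matI)

lemma transpose_col_block:
  "b \<le> dim_col M \<Longrightarrow> transpose_mat (col_block M a b) = row_block (transpose_mat M) a b"
  by (auto intro!: eq_matI)

lemma ctrans_col_block: "b \<le> dim_col M \<Longrightarrow> ctrans (col_block M a b) = row_block (ctrans M) a b"
  by (auto intro!: eq_matI)

lemma col_block_mult_eq_mult_pad_rows: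
  fixes M :: "'a::semiring_0 mat"
  assumes M: "M \<in> carrier_mat r k" and U: "U \<in> carrier_mat c s" and "c \<le> k"
  shows "col_block M 0 c * U = M * pad_rows U k"
proof (rule eq_matI)
  fix i j assume "i < dim_row (M * pad_rows U k)" "j < dim_col (M * pad_rows U k)"
  then have ij: "i < r" "j < s" using assms by auto
  let ?g = "\<lambda>l. M $$ (i,l) * (if l < c then U $$ (l,j) else 0)"
  have "(col_block M 0 c * U) $$ (i,j) = (\<Sum>l<c. ?g l)"
    using assms ij by (subst index_mult_mat_sum[of _ r c _ s]) auto
  also have "\<dots> = (\<Sum>l<k. ?g l)"
    using \<open>c \<le> k\<close> by (intro sum.mono_neutral_left) auto
  also have "\<dots> = (M * pad_rows U k) $$ (i,j)"
    using assms ij by (subst index_mult_mat_sum[of _ r k _ s]) auto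
  finally show "(col_block M 0 c * U) $$ (i,j) = (M * pad_rows U k) $$ (i,j)" .
qed (use assms in auto)

lemma row_block_mult:
  fixes X :: "'a::semiring_0 mat"
  assumes X: "X \<in> carrier_mat r k" and Y: "Y \<in> carrier_mat k s" and "b \<le> r"
  shows "row_block (X * Y) a b = row_block X a b * Y"
proof (rule eq_matI)
  fix i j assume "i < dim_row (row_block X a b * Y)" "j < dim_col (row_block X a b * Y)"
  then have ij: "i < b - a" "j < s" using assms by auto
  then show "row_block (X * Y) a b $$ (i,j) = (row_block X a b * Y) $$ (i,j)"
    using assms by (simp add: index_mult_mat_sum[of _ r k _ s] index_mult_mat_sum[of _ "b - a" k _ s])
qed (use assms in auto)

lemma mult_eq_col_block_mult_row_block_add:
  fixes M :: "'a::semiring_0 mat"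
  assumes M: "M \<in> carrier_mat r K" and X: "X \<in> carrier_mat K s" and "N \<le> K"
  shows "M * X = col_block M 0 N * row_block X 0 N + col_block M N K * row_block X N K"
proof (rule eq_matI)
  fix i j assume "i < dim_row (col_block M 0 N * row_block X 0 N + col_block M N K * row_block X N K)"
    "j < dim_col (col_block M 0 N * row_block X 0 N + col_block M N K * row_block X N K)"
  then have ij: "i < r" "j < s" using assms by auto
  let ?g = "\<lambda>l. M $$ (i,l) * X $$ (l,j)"
  have "(M * X) $$ (i,j) = (\<Sum>l\<in>{0..<N}. ?g l) + (\<Sum>l\<in>{N..<K}. ?g l)"
    using assms ij by (simp add: index_mult_mat_sum[of _ r K _ s] atLeast0LessThan[symmetric]
        sum.atLeastLessThan_concat)
  also have "(\<Sum>l\<in>{N..<K}. ?g l) = (\<Sum>l<K - N. ?g (N + l))"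
    by (simp only: sum.atLeastLessThan_shift_0 atLeast0LessThan comp_def)
  finally show "(M * X) $$ (i,j)
      = (col_block M 0 N * row_block X 0 N + col_block M N K * row_block X N K) $$ (i,j)"
    using assms ij
    by (simp add: index_mult_mat_sum[OF col_block_carrier_mat[OF M] row_block_carrier_mat[OF X]]
        index_mult_mat_sum[of _ r "K - N" _ s] atLeast0LessThan)
qed (use assms in auto)

lemma cmat_mult:
  assumes X: "X \<in> carrier_mat r k" and Y: "Y \<in> carrier_mat k s"
  shows "cmat (X * Y) = cmat X * cmat Y"
  using assms by (intro eq_matI) (auto simp: index_mult_mat_sum[of _ r k _ s] of_real_sum)

lemma ctrans_cmat: "ctrans (cmat X) = cmat (transpose_mat X)"
  by (auto intro!: eq_matI)

lemma cmat_one: "cmat (1\<^sub>m k) = 1\<^sub>m k"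
  by (auto intro!: eq_matI)

lemma cmat_col_block: "b \<le> dim_col X \<Longrightarrow> cmat (col_block X a b) = col_block (cmat X) a b"
  by (auto intro!: eq_matI)

lemma cmat_row_block: "b \<le> dim_row X \<Longrightarrow> cmat (row_block X a b) = row_block (cmat X) a b"
  by (auto intro!: eq_matI)

lemma ctrans_cmat_mult_self:
  assumes "V \<in> carrier_mat n k" and "transpose_mat V * V = 1\<^sub>m k"
  shows "ctrans (cmat V) * cmat V = 1\<^sub>m k"
  using cmat_mult[OF transpose_carrier_mat[THEN iffD2, OF assms(1)] assms(1)] assms(2)
  by (simp add: ctrans_cmat cmat_one)

definition frob_sq :: "complex mat \<Rightarrow> real" where
  "frob_sq X = (\<Sum>i<dim_row X. \<Sum>j<dim_col X. (cmod (X $$ (i,j)))\<^sup>2)"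

definition frob_inner :: "complex mat \<Rightarrow> complex mat \<Rightarrow> complex" where
  "frob_inner X Y = (\<Sum>i<dim_row X. \<Sum>j<dim_col X. cnj (X $$ (i,j)) * Y $$ (i,j))"

lemma frob_norm_eq_sqrt_frob_sq: "frob_norm X = sqrt (frob_sq X)"
  by (simp add: frob_norm_def frob_sq_def)

lemma frob_sq_nonneg: "frob_sq X \<ge> 0"
  unfolding frob_sq_def by (intro sum_nonneg) auto

lemma frob_norm_zero_minus: "X \<in> carrier_mat r c \<Longrightarrow> frob_norm (0\<^sub>m r c - X) = frob_norm X"
  by (simp add: frob_norm_def carrier_matD)

lemma frob_inner_self: "frob_inner X X = complex_of_real (frob_sq X)"
  unfolding frob_inner_def frob_sq_def of_real_sum
  by (intro sum.cong refl) (metis complex_norm_square mult.commute of_real_power)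

lemma frob_inner_mult_left:
  assumes M: "M \<in> carrier_mat a b" and Z: "Z \<in> carrier_mat b c" and D: "D \<in> carrier_mat a c"
  shows "frob_inner (M * Z) D = frob_inner Z (ctrans M * D)"
proof -
  have "frob_inner (M * Z) D = (\<Sum>i<a. \<Sum>j<c. \<Sum>l<b. cnj (M $$ (i,l)) * cnj (Z $$ (l,j)) * D $$ (i,j))"
    unfolding frob_inner_def using assms
    by (auto simp: index_mult_mat_sum[OF M Z] sum_distrib_right intro!: sum.cong)
  also have "\<dots> = (\<Sum>i<a. \<Sum>l<b. \<Sum>j<c. cnj (M $$ (i,l)) * cnj (Z $$ (l,j)) * D $$ (i,j))"
    by (intro sum.cong refl sum.swap)
  also have "\<dots> = (\<Sum>l<b. \<Sum>j<c. \<Sum>i<a. cnj (M $$ (i,l)) * cnj (Z $$ (l,j)) * D $$ (i,j))"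
    by (subst sum.swap) (intro sum.cong refl sum.swap)
  also have "\<dots> = frob_inner Z (ctrans M * D)"
    unfolding frob_inner_def using assms
    by (auto simp: index_mult_mat_sum[of "ctrans M" b a D c] sum_distrib_left intro!: sum.cong)
  finally show ?thesis .
qed

lemma frob_norm_isometry_mult:
  assumes U: "U \<in> carrier_mat a b" and UU: "ctrans U * U = 1\<^sub>m b" and X: "X \<in> carrier_mat b c"
  shows "frob_norm (U * X) = frob_norm X"
proof -
  have "frob_inner (U * X) (U * X) = frob_inner X (ctrans U * (U * X))"
    using U X by (intro frob_inner_mult_left) auto
  also have "ctrans U * (U * X) = (ctrans U * U) * X"
    using U X by (intro assoc_mult_mat[symmetric]) auto
  finally show ?thesis
    using UU X by (simp add: frob_inner_self frob_norm_eq_sqrt_frob_sq)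
qed

lemma frob_sq_minus_smult:
  assumes D: "D \<in> carrier_mat a c" and K: "K \<in> carrier_mat a c"
  shows "frob_sq (D - complex_of_real s \<cdot>\<^sub>m K) = frob_sq D - 2 * s * Re (frob_inner K D) + s\<^sup>2 * frob_sq K"
proof -
  have entry: "(cmod (d - complex_of_real s * k))\<^sup>2 = (cmod d)\<^sup>2 - 2 * s * Re (cnj k * d) + s\<^sup>2 * (cmod k)\<^sup>2"
    for d k unfolding cmod_power2 by (simp add: power2_eq_square algebra_simps)
  have "frob_sq (D - complex_of_real s \<cdot>\<^sub>m K) = (\<Sum>i<a. \<Sum>j<c.
      (cmod (D $$ (i,j)))\<^sup>2 - 2 * s * Re (cnj (K $$ (i,j)) * D $$ (i,j)) + s\<^sup>2 * (cmod (K $$ (i,j)))\<^sup>2)"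
    unfolding frob_sq_def using assms by (auto simp: entry intro!: sum.cong)
  also have "\<dots> = frob_sq D - 2 * s * Re (frob_inner K D) + s\<^sup>2 * frob_sq K"
    using assms unfolding frob_sq_def frob_inner_def Re_sum
    by (simp only: carrier_matD sum.distrib sum_subtractf sum_distrib_left)
  finally show ?thesis .
qed

lemma frob_sq_eq_0_imp_zero:
  assumes X: "X \<in> carrier_mat a c" and "frob_sq X = 0"
  shows "X = 0\<^sub>m a c"
proof (rule eq_matI)
  fix i j assume "i < dim_row (0\<^sub>m a c :: complex mat)" "j < dim_col (0\<^sub>m a c :: complex mat)"
  moreover have "\<forall>i<a. \<forall>j<c. (cmod (X $$ (i,j)))\<^sup>2 = 0"
    using assms by (simp add: frob_sq_def sum_nonneg_eq_0_iff sum_nonneg)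
  ultimately show "X $$ (i,j) = 0\<^sub>m a c $$ (i,j)" by auto
qed (use X in auto)

lemma frob_norm_eq_row_block_bottom:
  assumes X: "X \<in> carrier_mat a c" and "N \<le> a"
    and top: "row_block X 0 N = 0\<^sub>m N c"
  shows "frob_norm X = frob_norm (row_block X N a)"
proof -
  let ?f = "\<lambda>i. \<Sum>j<c. (cmod (X $$ (i,j)))\<^sup>2"
  have "X $$ (i,j) = 0" if "i < N" "j < c" for i j
    using arg_cong[OF top, of "\<lambda>Z. Z $$ (i,j)"] that X \<open>N \<le> a\<close> by simp
  then have "(\<Sum>i\<in>{0..<N}. ?f i) = 0" by simp
  moreover have "frob_sq X = (\<Sum>i\<in>{0..<N}. ?f i) + (\<Sum>i\<in>{N..<a}. ?f i)"
    unfolding sum.atLeastLessThan_concat[OF le0 \<open>N \<le> a\<close>]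
    using X by (simp add: frob_sq_def atLeast0LessThan)
  ultimately have "frob_sq X = (\<Sum>i\<in>{N..<a}. ?f i)" by simp
  also have "\<dots> = frob_sq (row_block X N a)"
    using X by (simp add: frob_sq_def sum.atLeastLessThan_shift_0 atLeast0LessThan)
  finally show ?thesis by (simp add: frob_norm_eq_sqrt_frob_sq)
qed

lemma least_squares_normal_equation:
  assumes M: "M \<in> carrier_mat a b" and Y: "Y \<in> carrier_mat b c" and G: "G \<in> carrier_mat a c"
    and min: "\<forall>Z \<in> carrier_mat b c. frob_norm (M * Y - G) \<le> frob_norm (M * Z - G)"
  shows "ctrans M * (M * Y - G) = 0\<^sub>m b c"
proof -
  define D where "D = M * Y - G"
  define W where "W = ctrans M * D"
  define K where "K = M * W"
  have D: "D \<in> carrier_mat a c" using M Y G by (auto simp: D_def)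
  have W: "W \<in> carrier_mat b c" using M D by (auto simp: W_def)
  have K: "K \<in> carrier_mat a c" using M W by (auto simp: K_def)
  have KD: "frob_inner K D = complex_of_real (frob_sq W)"
    unfolding K_def frob_inner_mult_left[OF M W D] by (simp add: W_def[symmetric] frob_inner_self)
  \<comment> \<open>Moving Y by the step s in the direction -W lowers the residual to first order in s.\<close>
  have descent: "2 * s * frob_sq W \<le> s\<^sup>2 * frob_sq K" if "s > 0" for s :: real
  proof -
    have "M * (Y - complex_of_real s \<cdot>\<^sub>m W) - G = D - complex_of_real s \<cdot>\<^sub>m K"
      using M Y W G by (auto simp: D_def K_def mult_minus_distrib_mat mult_smult_distrib intro!: eq_matI)
    moreover have "frob_norm D \<le> frob_norm (M * (Y - complex_of_real s \<cdot>\<^sub>m W) - G)"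
      using bspec[OF min, OF minus_carrier_mat[OF smult_carrier_mat[OF W]]] by (simp add: D_def)
    ultimately have "frob_sq D \<le> frob_sq (D - complex_of_real s \<cdot>\<^sub>m K)"
      by (simp add: frob_norm_eq_sqrt_frob_sq)
    then show ?thesis
      by (simp add: frob_sq_minus_smult[OF D K] KD)
  qed
  have "frob_sq W = 0"
  proof (rule ccontr)
    assume "frob_sq W \<noteq> 0"
    then have w: "frob_sq W > 0" using frob_sq_nonneg[of W] by simp
    define s where "s = frob_sq W / (frob_sq K + 1)"
    have s: "s > 0" using w frob_sq_nonneg[of K] by (simp add: s_def)
    then have "2 * frob_sq W \<le> s * frob_sq K"
      using descent[OF s] by (simp add: power2_eq_square)
    also have "s * frob_sq K < frob_sq W"
      using w frob_sq_nonneg[of K] by (simp add: s_def field_simps)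
    finally show False using w by simp
  qed
  then show ?thesis using frob_sq_eq_0_imp_zero[OF W] by (simp add: W_def D_def)
qed

lemma ctrans_mult_eq_0_if_range_orth_compl:
  assumes Q: "Q \<in> carrier_mat a k" and M: "M \<in> carrier_mat a b"
    and rg: "range_mat Q = orth_compl a (range_mat M)"
  shows "ctrans Q * M = 0\<^sub>m k b"
proof (rule eq_matI)
  fix i l assume "i < dim_row (0\<^sub>m k b :: complex mat)" "l < dim_col (0\<^sub>m k b :: complex mat)"
  then have i: "i < k" and l: "l < b" by auto
  have "Q *\<^sub>v unit_vec k i \<in> range_mat Q"
    using Q i unfolding range_mat_def by auto
  then have "Q *\<^sub>v unit_vec k i \<in> orth_compl a (range_mat M)"
    using rg by simp
  moreover have "M *\<^sub>v unit_vec b l \<in> range_mat M"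
    using M l unfolding range_mat_def by auto
  ultimately have "(\<Sum>r<a. cnj (M $$ (r,l)) * Q $$ (r,i)) = 0"
    using Q M i l unfolding orth_compl_def by auto
  then have "cnj (\<Sum>r<a. cnj (M $$ (r,l)) * Q $$ (r,i)) = 0"
    by simp
  then have "(\<Sum>r<a. cnj (Q $$ (r,i)) * M $$ (r,l)) = 0"
    by (simp add: mult.commute)
  then show "(ctrans Q * M) $$ (i,l) = 0\<^sub>m k b $$ (i,l)"
    using Q M i l by (simp add: index_mult_mat_sum[of _ k a _ b])
qed (use Q M in auto)

lemma col_mem_orth_compl_if_ctrans_mult_eq_0:
  assumes M: "M \<in> carrier_mat a b" and D: "D \<in> carrier_mat a c"
    and z: "ctrans M * D = 0\<^sub>m b c" and j: "j < c"
  shows "col D j \<in> orth_compl a (range_mat M)"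
  unfolding orth_compl_def
proof safe
  show "col D j \<in> carrier_vec a" using D by auto
next
  fix y assume "y \<in> range_mat M"
  then obtain v where v: "v \<in> carrier_vec b" and y: "y = M *\<^sub>v v"
    unfolding range_mat_def using M by auto
  have "(\<Sum>r<a. cnj (y $ r) * col D j $ r) = (\<Sum>r<a. \<Sum>l<b. cnj (M $$ (r,l)) * cnj (v $ l) * D $$ (r,j))"
    using M D v j by (auto simp: y scalar_prod_def sum_distrib_right lessThan_atLeast0 intro!: sum.cong)
  also have "\<dots> = (\<Sum>l<b. \<Sum>r<a. cnj (M $$ (r,l)) * cnj (v $ l) * D $$ (r,j))"
    by (rule sum.swap)
  also have "\<dots> = (\<Sum>l<b. cnj (v $ l) * (ctrans M * D) $$ (l,j))"
    using M D v j by (auto simp: index_mult_mat_sum[of _ b a _ c] sum_distrib_left intro!: sum.cong)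
  also have "\<dots> = 0" using z j by simp
  finally show "(\<Sum>r<a. cnj (y $ r) * col D j $ r) = 0" .
qed

lemma exists_mult_eq_if_cols_in_range_mat:
  assumes Q: "Q \<in> carrier_mat a k" and D: "D \<in> carrier_mat a c"
    and cols: "\<forall>j<c. col D j \<in> range_mat Q"
  shows "\<exists>X \<in> carrier_mat k c. Q * X = D"
proof -
  have "\<forall>j. \<exists>x. j < c \<longrightarrow> x \<in> carrier_vec k \<and> Q *\<^sub>v x = col D j"
  proof
    fix j show "\<exists>x. j < c \<longrightarrow> x \<in> carrier_vec k \<and> Q *\<^sub>v x = col D j"
    proof (cases "j < c")
      case True
      then have "col D j \<in> range_mat Q" using cols by simp
      then obtain x where "x \<in> carrier_vec (dim_col Q)" "col D j = Q *\<^sub>v x"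
        unfolding range_mat_def by blast
      then show ?thesis using Q by auto
    qed simp
  qed
  then obtain f where f: "\<And>j. j < c \<Longrightarrow> f j \<in> carrier_vec k \<and> Q *\<^sub>v f j = col D j"
    by metis
  define X where "X = mat k c (\<lambda>(i,j). f j $ i)"
  have X: "X \<in> carrier_mat k c" by (simp add: X_def)
  have "Q * X = D"
  proof (rule eq_matI)
    fix r j assume "r < dim_row D" "j < dim_col D"
    then have rj: "r < a" "j < c" using D by auto
    have fj: "f j \<in> carrier_vec k" using f[OF rj(2)] by simp
    have "(Q * X) $$ (r,j) = (\<Sum>l<k. Q $$ (r,l) * f j $ l)"
      using Q X rj by (subst index_mult_mat_sum[of _ a k _ c]) (auto simp: X_def)
    also have "\<dots> = (Q *\<^sub>v f j) $ r"
      using Q fj rj by (auto simp: scalar_prod_def lessThan_atLeast0 intro!: sum.cong)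
    also have "\<dots> = D $$ (r,j)" using f[OF rj(2)] rj D by auto
    finally show "(Q * X) $$ (r,j) = D $$ (r,j)" .
  qed (use Q X D in auto)
  with X show ?thesis by blast
qed

lemma least_squares_residual_norm:
  assumes M: "M \<in> carrier_mat a b" and Y: "Y \<in> carrier_mat b c" and G: "G \<in> carrier_mat a c"
    and min: "\<forall>Z \<in> carrier_mat b c. frob_norm (M * Y - G) \<le> frob_norm (M * Z - G)"
    and Q: "Q \<in> carrier_mat a k" and QQ: "ctrans Q * Q = 1\<^sub>m k"
    and rg: "range_mat Q = orth_compl a (range_mat M)"
  shows "frob_norm (M * Y - G) = frob_norm (ctrans Q * G)"
proof -
  define D where "D = M * Y - G"
  have D: "D \<in> carrier_mat a c" using M Y G by (auto simp: D_def)
  have "ctrans M * D = 0\<^sub>m b c"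
    unfolding D_def by (rule least_squares_normal_equation[OF M Y G min])
  then have "\<forall>j<c. col D j \<in> range_mat Q"
    using col_mem_orth_compl_if_ctrans_mult_eq_0[OF M D] rg by simp
  then obtain X where X: "X \<in> carrier_mat k c" and QX: "Q * X = D"
    using exists_mult_eq_if_cols_in_range_mat[OF Q D] by blast
  have "X = (ctrans Q * Q) * X"
    using QQ X by simp
  also have "\<dots> = ctrans Q * (Q * X)"
    using Q X by (intro assoc_mult_mat) auto
  also have "\<dots> = ctrans Q * (M * Y) - ctrans Q * G"
    using Q M Y G by (simp add: QX D_def mult_minus_distrib_mat[of _ k a _ c])
  also have "ctrans Q * (M * Y) = (ctrans Q * M) * Y"
    using Q M Y by (intro assoc_mult_mat[symmetric]) auto
  also have "\<dots> = 0\<^sub>m k c"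
    using Y by (simp add: ctrans_mult_eq_0_if_range_orth_compl[OF Q M rg])
  finally have "frob_norm (ctrans Q * G) = frob_norm X"
    using frob_norm_zero_minus[OF mult_carrier_mat[OF ctrans_carrier_mat[OF Q] G]] by simp
  also have "\<dots> = frob_norm D"
    using frob_norm_isometry_mult[OF Q QQ X] QX by simp
  finally show ?thesis by (simp add: D_def)
qed

lemma nested_bases_prefix:
  assumes nest: "\<And>m. 1 \<le> m \<Longrightarrow> m \<le> M \<Longrightarrow> V m = col_block (V (m+1)) 0 (2*m*q)"
    and "1 \<le> k" "k < l" "l \<le> M + 1"
  shows "V k = col_block (V l) 0 (2*k*q)"
proof -
  have "V k = col_block (V (Suc k + d)) 0 (2*k*q)" if "Suc k + d \<le> M + 1" for d
    using that
  proof (induction d)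
    case 0
    then show ?case using nest \<open>1 \<le> k\<close> by simp
  next
    case (Suc d)
    then have "V k = col_block (V (Suc k + d)) 0 (2*k*q)" by simp
    also have "V (Suc k + d) = col_block (V (Suc k + d + 1)) 0 (2*(Suc k + d)*q)"
      using nest Suc.prems by simp
    also have "2*k*q \<le> 2*(Suc k + d)*q" by (intro mult_le_mono) auto
    then have "col_block (col_block (V (Suc k + d + 1)) 0 (2*(Suc k + d)*q)) 0 (2*k*q)
        = col_block (V (Suc (Suc k + d))) 0 (2*k*q)"
      by (simp add: col_block_col_block)
    finally show ?case by simp
  qed
  from this[of "l - Suc k"] show ?thesis using assms by simp
qed

lemma row_block_projection_top:
  fixes A V1 :: "'a::comm_ring_1 mat"
  assumes A: "A \<in> carrier_mat n n" and V1: "V1 \<in> carrier_mat n N1" and "N \<le> N1"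
    and V: "V = col_block V1 0 N"
  shows "row_block (transpose_mat V1 * A * V) 0 N = transpose_mat V * A * V"
proof -
  have "row_block (transpose_mat V1 * A * V) 0 N = row_block (transpose_mat V1 * A) 0 N * V"
    using A V1 V \<open>N \<le> N1\<close> by (intro row_block_mult[of _ N1 n _ N]) auto
  also have "row_block (transpose_mat V1 * A) 0 N = row_block (transpose_mat V1) 0 N * A"
    using A V1 \<open>N \<le> N1\<close> by (intro row_block_mult) auto
  finally show ?thesis using V1 V \<open>N \<le> N1\<close> by (simp add: transpose_col_block)
qed

lemma arnoldi_relation_full:
  fixes A V1 :: "'a::comm_ring_1 mat"
  assumes A: "A \<in> carrier_mat n n" and V1: "V1 \<in> carrier_mat n N1" and "N \<le> N1"
    and V: "V = col_block V1 0 N"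
    and arnoldi: "A * V = V * (transpose_mat V * A * V)
      + col_block V1 N N1 * row_block (transpose_mat V1 * A * V) N N1"
  shows "A * V = V1 * (transpose_mat V1 * A * V)"
proof -
  have "transpose_mat V1 * A * V \<in> carrier_mat N1 N"
    using A V1 V by auto
  then show ?thesis
    using mult_eq_col_block_mult_row_block_add[OF V1 _ \<open>N \<le> N1\<close>] arnoldi
      row_block_projection_top[OF A V1 \<open>N \<le> N1\<close> V] V by simp
qed

lemma shifted_residual_factor:
  fixes K W W0 W1 H P U G Z :: "'a::comm_ring_1 mat"
  assumes K: "K \<in> carrier_mat n n" and W1: "W1 \<in> carrier_mat n N1"
    and H: "H \<in> carrier_mat N1 N" and P: "P \<in> carrier_mat N1 N"
    and Z: "Z \<in> carrier_mat N c" and G: "G \<in> carrier_mat N1 c"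
    and KW: "K * W = W1 * H" and WP: "W = W1 * P" and UG: "W0 * U = W1 * G"
  shows "(K + p \<cdot>\<^sub>m 1\<^sub>m n) * (W * Z) - W0 * U = W1 * ((H + p \<cdot>\<^sub>m P) * Z - G)"
proof -
  have W: "W \<in> carrier_mat n N" unfolding WP using W1 P by (rule mult_carrier_mat)
  have WZ: "W * Z \<in> carrier_mat n c" using W Z by (rule mult_carrier_mat)
  have HPZ: "(H + p \<cdot>\<^sub>m P) * Z \<in> carrier_mat N1 c" using H P Z by auto
  have "(K + p \<cdot>\<^sub>m 1\<^sub>m n) * (W * Z) = K * (W * Z) + (p \<cdot>\<^sub>m 1\<^sub>m n) * (W * Z)"
    by (rule add_mult_distrib_mat[OF K smult_carrier_mat[OF one_carrier_mat] WZ])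
  also have "K * (W * Z) = (K * W) * Z"
    by (rule assoc_mult_mat[OF K W Z, symmetric])
  also have "\<dots> = W1 * (H * Z)"
    unfolding KW by (rule assoc_mult_mat[OF W1 H Z])
  also have "(p \<cdot>\<^sub>m 1\<^sub>m n) * (W * Z) = p \<cdot>\<^sub>m (W * Z)"
    using mult_smult_assoc_mat[OF one_carrier_mat WZ] left_mult_one_mat[OF WZ] by simp
  also have "p \<cdot>\<^sub>m (W * Z) = W1 * (p \<cdot>\<^sub>m (P * Z))"
    unfolding WP assoc_mult_mat[OF W1 P Z]
    by (rule mult_smult_distrib[OF W1 mult_carrier_mat[OF P Z], symmetric])
  also have "W1 * (H * Z) + W1 * (p \<cdot>\<^sub>m (P * Z)) = W1 * (H * Z + p \<cdot>\<^sub>m (P * Z))"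
    using H P Z by (intro mult_add_distrib_mat[OF W1, symmetric]) auto
  also have "H * Z + p \<cdot>\<^sub>m (P * Z) = (H + p \<cdot>\<^sub>m P) * Z"
    using add_mult_distrib_mat[OF H smult_carrier_mat[OF P] Z] mult_smult_assoc_mat[OF P Z] by simp
  finally show ?thesis
    using mult_minus_distrib_mat[OF W1 HPZ G] by (simp add: UG)
qed

lemma block_arnoldi_shifted_residual:
  fixes A :: "real mat" and V :: "nat \<Rightarrow> real mat" and m :: nat and p :: complex
    and U Z :: "complex mat"
  defines "H \<equiv> transpose_mat (V (m+1)) * A * V m"
  assumes A: "A \<in> carrier_mat n n" and V1: "V (m+1) \<in> carrier_mat n (2*(m+1)*q)"
    and nest: "\<And>l. 1 \<le> l \<Longrightarrow> l \<le> m \<Longrightarrow> V l = col_block (V (l+1)) 0 (2*l*q)"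
    and arnoldi: "A * V m = V m * (transpose_mat (V m) * A * V m)
      + col_block (V (m+1)) (2*m*q) (2*(m+1)*q) * row_block H (2*m*q) (2*(m+1)*q)"
    and k: "1 \<le> k" "k \<le> m" and U: "U \<in> carrier_mat (2*k*q) c"
    and Z: "Z \<in> carrier_mat (2*m*q) c"
  shows "(cmat A + p \<cdot>\<^sub>m 1\<^sub>m n) * (cmat (V m) * Z) - cmat (V k) * U
    = cmat (V (m+1)) * ((cmat H + p \<cdot>\<^sub>m pad_rows (1\<^sub>m (2*m*q)) (2*(m+1)*q)) * Z
        - pad_rows U (2*(m+1)*q))"
proof -
  let ?N = "2*m*q" and ?N1 = "2*(m+1)*q" and ?W1 = "cmat (V (m+1))"
  have N: "?N \<le> ?N1" by simp
  have Nk: "2*k*q \<le> ?N1" using k by (intro mult_le_mono) auto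
  have Vm: "V m = col_block (V (m+1)) 0 ?N"
    using nest k by simp
  have Vk: "V k = col_block (V (m+1)) 0 (2*k*q)"
    using nested_bases_prefix[OF nest] k by simp
  have Vmc: "V m \<in> carrier_mat n ?N" using V1 Vm by simp
  have Hc: "H \<in> carrier_mat ?N1 ?N" using A V1 Vmc by (auto simp: H_def)
  have "A * V m = V (m+1) * H"
    using arnoldi_relation_full[OF A V1 N Vm arnoldi[unfolded H_def]] by (simp add: H_def)
  then have "cmat A * cmat (V m) = ?W1 * cmat H"
    using cmat_mult[OF A Vmc] cmat_mult[OF V1 Hc] by simp
  moreover have "cmat (V m) = ?W1 * pad_rows (1\<^sub>m ?N) ?N1"
    using col_block_mult_eq_mult_pad_rows[OF cmat_carrier_mat[OF V1] one_carrier_mat N] V1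
    by (simp add: Vm cmat_col_block)
  moreover have "cmat (V k) * U = ?W1 * pad_rows U ?N1"
    using col_block_mult_eq_mult_pad_rows[OF cmat_carrier_mat[OF V1] U Nk] carrier_matD[OF V1] Nk
    by (simp add: Vk cmat_col_block)
  ultimately show ?thesis
    by (rule shifted_residual_factor[OF cmat_carrier_mat[OF A] cmat_carrier_mat[OF V1]
          cmat_carrier_mat[OF Hc] pad_rows_carrier_mat[OF one_carrier_mat] Z pad_rows_carrier_mat[OF U]])
qed

lemma row_blocks_add_smult_pad_one:
  fixes H :: "'a::comm_ring_1 mat"
  assumes "H \<in> carrier_mat N1 N" "N \<le> N1"
  shows "row_block (H + p \<cdot>\<^sub>m pad_rows (1\<^sub>m N) N1) 0 N = row_block H 0 N + p \<cdot>\<^sub>m 1\<^sub>m N"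
    and "row_block (H + p \<cdot>\<^sub>m pad_rows (1\<^sub>m N) N1) N N1 = row_block H N N1"
  using assms by (auto intro!: eq_matI)

lemma row_blocks_shifted_projection:
  fixes A :: "real mat" and p :: complex
  assumes A: "A \<in> carrier_mat n n" and V1: "V1 \<in> carrier_mat n N1" and N: "N \<le> N1"
    and V: "V = col_block V1 0 N"
  defines "M \<equiv> cmat (transpose_mat V1 * A * V) + p \<cdot>\<^sub>m pad_rows (1\<^sub>m N) N1"
  shows "row_block M 0 N = cmat (transpose_mat V * A * V) + p \<cdot>\<^sub>m 1\<^sub>m N"
    and "row_block M N N1 = cmat (row_block (transpose_mat V1 * A * V) N N1)"
proof -
  have H: "transpose_mat V1 * A * V \<in> carrier_mat N1 N" using A V1 V by auto
  show "row_block M 0 N = cmat (transpose_mat V * A * V) + p \<cdot>\<^sub>m 1\<^sub>m N"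
    using row_blocks_add_smult_pad_one(1)[OF cmat_carrier_mat[OF H] N] cmat_row_block[of N "transpose_mat V1 * A * V" 0]
      carrier_matD[OF H] N row_block_projection_top[OF A V1 N V]
    by (simp add: M_def)
  show "row_block M N N1 = cmat (row_block (transpose_mat V1 * A * V) N N1)"
    using row_blocks_add_smult_pad_one(2)[OF cmat_carrier_mat[OF H] N] cmat_row_block[of N1 "transpose_mat V1 * A * V" N]
      carrier_matD[OF H]
    by (simp add: M_def)
qed

lemma galerkin_residual:
  assumes W1: "W1 \<in> carrier_mat a N1" and iso: "ctrans W1 * W1 = 1\<^sub>m N1"
    and M: "M \<in> carrier_mat N1 N" and U: "U \<in> carrier_mat N0 c" and Y: "Y \<in> carrier_mat N c"
    and "N0 \<le> N" "N \<le> N1"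
    and gal: "ctrans (col_block W1 0 N) * (W1 * (M * Y - pad_rows U N1)) = 0\<^sub>m N c"
  shows "row_block M 0 N * Y = pad_rows U N"
    and "frob_norm (W1 * (M * Y - pad_rows U N1)) = frob_norm (row_block M N N1 * Y)"
proof -
  define D where "D = M * Y - pad_rows U N1"
  have D: "D \<in> carrier_mat N1 c" using M Y U by (auto simp: D_def)
  have "ctrans (col_block W1 0 N) * (W1 * D) = row_block (ctrans W1 * (W1 * D)) 0 N"
    using carrier_matD[OF W1] \<open>N \<le> N1\<close>
      row_block_mult[OF ctrans_carrier_mat[OF W1] mult_carrier_mat[OF W1 D] \<open>N \<le> N1\<close>]
    by (simp add: ctrans_col_block)
  also have "ctrans W1 * (W1 * D) = (ctrans W1 * W1) * D"
    using W1 D by (intro assoc_mult_mat[symmetric]) auto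
  finally have top: "row_block D 0 N = 0\<^sub>m N c"
    using gal iso D by (simp add: D_def)
  have MY: "row_block M a' b' * Y = row_block (M * Y) a' b'" if "b' \<le> N1" for a' b'
    using M Y that by (simp add: row_block_mult)
  show "row_block M 0 N * Y = pad_rows U N"
  proof (rule eq_matI)
    fix i j assume "i < dim_row (pad_rows U N)" "j < dim_col (pad_rows U N)"
    then have ij: "i < N" "j < c" using U by auto
    then have "D $$ (i,j) = 0"
      using arg_cong[OF top, of "\<lambda>X. X $$ (i,j)"] D \<open>N \<le> N1\<close> by simp
    then show "(row_block M 0 N * Y) $$ (i,j) = pad_rows U N $$ (i,j)"
      unfolding MY[OF \<open>N \<le> N1\<close>] using ij M Y U \<open>N \<le> N1\<close> by (simp add: D_def)
  qed (use M Y U in auto)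
  have bottom: "row_block D N N1 = row_block M N N1 * Y"
    unfolding MY[OF order.refl] using M Y U \<open>N0 \<le> N\<close> by (auto simp: D_def intro!: eq_matI)
  have "frob_norm (W1 * D) = frob_norm D"
    by (rule frob_norm_isometry_mult[OF W1 iso D])
  also have "\<dots> = frob_norm (row_block D N N1)"
    by (rule frob_norm_eq_row_block_bottom[OF D \<open>N \<le> N1\<close> top])
  finally show "frob_norm (W1 * (M * Y - pad_rows U N1)) = frob_norm (row_block M N N1 * Y)"
    by (simp add: D_def[symmetric] bottom)
qed

theorem corollary3p2:
  fixes A B :: "real mat" and V :: "nat \<Rightarrow> real mat"
    and n q mjm1 mj :: nat and p :: complex
    and Ups Y :: "complex mat"
  defines "Tu \<equiv> \<lambda>m. transpose_mat (V (m+1)) * A * V m"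
      and "T \<equiv> \<lambda>m. transpose_mat (V m) * A * V m"
      and "R \<equiv> \<lambda>Z. (cmat A + p \<cdot>\<^sub>m 1\<^sub>m n) * (cmat (V mj) * Z) - cmat (V mjm1) * Ups"
  assumes A: "A \<in> carrier_mat n n" and stab: "asympt_stable A"
    and B: "B \<in> carrier_mat n q"
    and Vdim: "\<And>m. 1 \<le> m \<Longrightarrow> m \<le> mj + 1 \<Longrightarrow> V m \<in> carrier_mat n (2*m*q)"
    and Vorth: "\<And>m. 1 \<le> m \<Longrightarrow> m \<le> mj + 1 \<Longrightarrow> transpose_mat (V m) * V m = 1\<^sub>m (2*m*q)"
    and Vspan: "\<And>m. 1 \<le> m \<Longrightarrow> m \<le> mj + 1 \<Longrightarrow> range_mat (V m) = ext_krylov A B m"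
    and Vnest: "\<And>m. 1 \<le> m \<Longrightarrow> m \<le> mj \<Longrightarrow> V m = col_block (V (m+1)) 0 (2*m*q)"
    and arnoldi: "\<And>m. 1 \<le> m \<Longrightarrow> m \<le> mj \<Longrightarrow>
        A * V m = V m * T m
          + col_block (V (m+1)) (2*m*q) (2*(m+1)*q) * row_block (Tu m) (2*m*q) (2*(m+1)*q)"
    and p: "Re p < 0"
    and m: "1 \<le> mjm1" "mjm1 \<le> mj"
    and Ups: "Ups \<in> carrier_mat (2*mjm1*q) q"
    and Y: "Y \<in> carrier_mat (2*mj*q) q"
  shows "(ctrans (cmat (V mj)) * R Y = 0\<^sub>m (2*mj*q) q \<longrightarrow>
            (cmat (T mj) + p \<cdot>\<^sub>m 1\<^sub>m (2*mj*q)) * Y = pad_rows Ups (2*mj*q)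
          \<and> frob_norm (R Y) = frob_norm (cmat (row_block (Tu mj) (2*mj*q) (2*(mj+1)*q)) * Y))
       \<and> ((\<forall>Z \<in> carrier_mat (2*mj*q) q. frob_norm (R Y) \<le> frob_norm (R Z)) \<longrightarrow>
            (let M = cmat (Tu mj) + p \<cdot>\<^sub>m pad_rows (1\<^sub>m (2*mj*q)) (2*(mj+1)*q);
                 G = pad_rows Ups (2*(mj+1)*q)
             in (\<forall>Z \<in> carrier_mat (2*mj*q) q. frob_norm (M * Y - G) \<le> frob_norm (M * Z - G))
              \<and> (\<forall>Q2 k. Q2 \<in> carrier_mat (2*(mj+1)*q) k \<longrightarrow> ctrans Q2 * Q2 = 1\<^sub>m k \<longrightarrow>
                   range_mat Q2 = orth_compl (2*(mj+1)*q) (range_mat M) \<longrightarrow>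
                   frob_norm (R Y) = frob_norm (ctrans Q2 * G))))"
proof -
  let ?N = "2*mj*q" and ?N1 = "2*(mj+1)*q"
  define M where "M = cmat (Tu mj) + p \<cdot>\<^sub>m pad_rows (1\<^sub>m ?N) ?N1"
  define G where "G = pad_rows Ups ?N1"
  define W1 where "W1 = cmat (V (mj+1))"
  have mj: "1 \<le> mj" and N: "?N \<le> ?N1" and "2*mjm1*q \<le> ?N" using m by auto
  have V1: "V (mj+1) \<in> carrier_mat n ?N1" using Vdim[of "mj+1"] by simp
  have Vmj: "V mj = col_block (V (mj+1)) 0 ?N" using Vnest mj by simp
  have W1: "W1 \<in> carrier_mat n ?N1" using V1 by (simp add: W1_def)
  have iso: "ctrans W1 * W1 = 1\<^sub>m ?N1"
    using ctrans_cmat_mult_self[OF V1] Vorth[of "mj+1"] by (simp add: W1_def)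
  have M: "M \<in> carrier_mat ?N1 ?N" and G: "G \<in> carrier_mat ?N1 q"
    using A V1 Ups by (auto simp: M_def G_def Tu_def Vmj)
  have residual: "R Z = W1 * (M * Z - G)" if "Z \<in> carrier_mat ?N q" for Z
    using block_arnoldi_shifted_residual[OF A V1 Vnest arnoldi[OF mj order.refl, unfolded T_def Tu_def]
        m Ups that]
    by (simp add: R_def M_def G_def W1_def Tu_def)
  have norm: "frob_norm (R Z) = frob_norm (M * Z - G)" if "Z \<in> carrier_mat ?N q" for Z
    unfolding residual[OF that] by (rule frob_norm_isometry_mult[OF W1 iso minus_carrier_mat[OF G]])
  have M_top: "row_block M 0 ?N = cmat (T mj) + p \<cdot>\<^sub>m 1\<^sub>m ?N"
    using row_blocks_shifted_projection(1)[OF A V1 N Vmj] by (simp add: M_def T_def Tu_def)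
  have M_bottom: "row_block M ?N ?N1 = cmat (row_block (Tu mj) ?N ?N1)"
    using row_blocks_shifted_projection(2)[OF A V1 N Vmj] by (simp add: M_def Tu_def)
  have projected_system: "(cmat (T mj) + p \<cdot>\<^sub>m 1\<^sub>m ?N) * Y = pad_rows Ups ?N"
    and galerkin_norm: "frob_norm (R Y) = frob_norm (cmat (row_block (Tu mj) ?N ?N1) * Y)"
    if "ctrans (cmat (V mj)) * R Y = 0\<^sub>m ?N q"
  proof -
    have "ctrans (col_block W1 0 ?N) * (W1 * (M * Y - G)) = 0\<^sub>m ?N q"
      using that residual[OF Y] V1 by (simp add: Vmj W1_def cmat_col_block)
    note galerkin = galerkin_residual[OF W1 iso M Ups Y \<open>2*mjm1*q \<le> ?N\<close> N this[unfolded G_def]]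
    show "(cmat (T mj) + p \<cdot>\<^sub>m 1\<^sub>m ?N) * Y = pad_rows Ups ?N"
      using galerkin(1) by (simp add: M_top)
    show "frob_norm (R Y) = frob_norm (cmat (row_block (Tu mj) ?N ?N1) * Y)"
      using galerkin(2) residual[OF Y] unfolding M_bottom G_def by simp
  qed
  have minimal_residual: "\<forall>Z \<in> carrier_mat ?N q. frob_norm (M * Y - G) \<le> frob_norm (M * Z - G)"
    if "\<forall>Z \<in> carrier_mat ?N q. frob_norm (R Y) \<le> frob_norm (R Z)"
    using that norm Y by simp
  show ?thesis
    unfolding Let_def M_def[symmetric] G_def[symmetric]
    using projected_system galerkin_norm minimal_residual
      least_squares_residual_norm[OF M Y G minimal_residual] norm[OF Y] by auto
qed

end
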